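(* Let $S$ be a $\Gamma$-AG$^{**}$-groupoid. Then $S$ is intra-regular if and only if every $\Gamma$-bi-ideal $B$ of $S$ is $\Gamma$-idempotent, i.e. $B\Gamma B=B$.
   Context: Let $S$ and $\Gamma$ be nonempty sets with a map $S\times\Gamma\times S\to S$, $(x,\gamma,y)\mapsto x\gamma y$. $S$ is a $\Gamma$-AG-groupoid if $(x\gamma y)\delta z=(z\gamma y)\delta x$ for all $x,y,z\in S$, $\gamma,\delta\in\Gamma$; it is a $\Gamma$-AG$^{**}$-groupoid if moreover $a\alpha(b\beta c)=b\alpha(a\beta c)$ for all $a,b,c\in S$, $\alpha,\beta\in\Gamma$. For subsets $A,B\subseteq S$, $A\Gamma B=\{a\gamma b: a\in A,\gamma\in\Gamma,b\in B\}$. $S$ is intra-regular if for every $a\in S$ there exist $x,y\in S$ and $\beta,\gamma,\delta\in\Gamma$ with $a=(x\beta(a\delta a))\gamma y$. A nonempty subset $B\subseteq S$ is a $\Gamma$-bi-ideal if $B\Gamma B\subseteq B$ and $(B\Gamma S)\Gamma B\subseteq B$. *)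

theory Defs
  imports Main
begin

text \<open>A Gamma-groupoid: carrier S is the type 'a, Gamma is the type 'g (both nonempty),
  with ternary operation op x g y standing for x g y.\<close>

definition gamma_AG :: "('a \<Rightarrow> 'g \<Rightarrow> 'a \<Rightarrow> 'a) \<Rightarrow> bool" where
  "gamma_AG op \<longleftrightarrow> (\<forall>x y z g d. op (op x g y) d z = op (op z g y) d x)"

definition gamma_AG2 :: "('a \<Rightarrow> 'g \<Rightarrow> 'a \<Rightarrow> 'a) \<Rightarrow> bool" where
  "gamma_AG2 op \<longleftrightarrow> gamma_AG op \<and>
     (\<forall>a b c al be. op a al (op b be c) = op b al (op a be c))"

definition gprod :: "('a \<Rightarrow> 'g \<Rightarrow> 'a \<Rightarrow> 'a) \<Rightarrow> 'a set \<Rightarrow> 'a set \<Rightarrow> 'a set" where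
  "gprod op A B = {op a g b | a g b. a \<in> A \<and> b \<in> B}"

definition intra_regular :: "('a \<Rightarrow> 'g \<Rightarrow> 'a \<Rightarrow> 'a) \<Rightarrow> bool" where
  "intra_regular op \<longleftrightarrow>
     (\<forall>a. \<exists>x y be ga de. a = op (op x be (op a de a)) ga y)"

definition gamma_bi_ideal :: "('a \<Rightarrow> 'g \<Rightarrow> 'a \<Rightarrow> 'a) \<Rightarrow> 'a set \<Rightarrow> bool" where
  "gamma_bi_ideal op B \<longleftrightarrow> B \<noteq> {} \<and> gprod op B B \<subseteq> B \<and>
     gprod op (gprod op B UNIV) B \<subseteq> B"

end

theory Submission
  imports Defs
begin

(* We first record the left invertive law, the exchange law a(bc) = b(ac) and the derived
   medial and paramedial laws.
   (=>) In an intra-regular AG**-groupoid every b can be rewritten as b = (bb)z and then as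
   b = b((bw)b); the factor (bw)b lies in (B Gamma S) Gamma B, so b lies in B Gamma B.
   (<=) Nonempty left ideals are bi-ideals.  Since S itself is a bi-ideal, S = S Gamma S,
   and with this the sets S Gamma a and {a} u S Gamma a are left ideals.  Idempotency of the
   latter puts a into S Gamma a, idempotency of the former gives a = (sa)(ta), and the
   medial and exchange laws turn this into a = (u(aa))(ua). *)

lemma left_invertive:
  assumes "gamma_AG op"
  shows "op (op x g y) d z = op (op z g y) d x"
  using assms unfolding gamma_AG_def by blast

lemma AG2_is_AG: "gamma_AG2 op \<Longrightarrow> gamma_AG op"
  unfolding gamma_AG2_def by blast

lemma AG2_exchange:
  assumes "gamma_AG2 op"
  shows "op a al (op b be c) = op b al (op a be c)"
  using assms unfolding gamma_AG2_def by blast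

lemma medial:
  assumes AG: "gamma_AG op"
  shows "op (op x g y) d (op z e w) = op (op x g z) d (op y e w)"
proof -
  have "op (op x g y) d (op z e w) = op (op (op z e w) g y) d x"
    using left_invertive[OF AG] .
  also have "\<dots> = op (op (op y e w) g z) d x"
    using left_invertive[OF AG, of z e w g y] by simp
  also have "\<dots> = op (op x g z) d (op y e w)"
    using left_invertive[OF AG] by metis
  finally show ?thesis .
qed

lemma paramedial:
  assumes AG2: "gamma_AG2 op"
  shows "op (op x g y) d (op z e w) = op (op w g z) d (op y e x)"
proof -
  note AG = AG2_is_AG[OF AG2]
  have "op (op x g y) d (op z e w) = op z d (op (op x g y) e w)"
    using AG2_exchange[OF AG2] .
  also have "\<dots> = op z d (op (op w g y) e x)"
    using left_invertive[OF AG, of x g y e w] by simp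
  also have "\<dots> = op (op w g y) d (op z e x)"
    using AG2_exchange[OF AG2] by metis
  also have "\<dots> = op (op w g z) d (op y e x)"
    using medial[OF AG] .
  finally show ?thesis .
qed

lemma intra_regular_decomposable:
  assumes "intra_regular op"
  shows "\<exists>u g v. y = op u g v"
  using assms unfolding intra_regular_def by blast

lemma intra_regular_square_factor:
  assumes AG2: "gamma_AG2 op" and ir: "intra_regular op"
  shows "\<exists>de ga z. b = op (op b de b) ga z"
proof -
  obtain x y be ga de where b: "b = op (op x be (op b de b)) ga y"
    using ir unfolding intra_regular_def by blast
  obtain y1 e1 y2 where y: "y = op y1 e1 y2"
    using intra_regular_decomposable[OF ir] by blast
  have "b = op (op x be (op b de b)) ga (op y1 e1 y2)" using b y by simp
  also have "\<dots> = op (op y2 be y1) ga (op (op b de b) e1 x)"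
    using paramedial[OF AG2] .
  also have "\<dots> = op (op b de b) ga (op (op y2 be y1) e1 x)"
    using AG2_exchange[OF AG2] .
  finally show ?thesis by blast
qed

lemma intra_regular_bi_factor:
  assumes AG2: "gamma_AG2 op" and ir: "intra_regular op"
  shows "\<exists>ga de w. b = op b ga (op (op b de w) de b)"
proof -
  note AG = AG2_is_AG[OF AG2]
  obtain de ga z where bz: "b = op (op b de b) ga z"
    using intra_regular_square_factor[OF AG2 ir] by blast
  have zb: "op z de b = op (op b de b) de (op z ga z)"
  proof -
    have "op z de b = op z de (op (op b de b) ga z)" using bz by simp
    also have "\<dots> = op (op b de b) de (op z ga z)" using AG2_exchange[OF AG2] .
    finally show ?thesis .
  qed
  have "b = op (op z de b) ga b" using bz left_invertive[OF AG] by metis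
  also have "\<dots> = op (op (op b de b) de (op z ga z)) ga b" using zb by simp
  also have "\<dots> = op (op b de (op z ga z)) ga (op b de b)" using left_invertive[OF AG] .
  also have "\<dots> = op b ga (op (op b de (op z ga z)) de b)" using AG2_exchange[OF AG2] .
  finally show ?thesis by blast
qed

lemma intra_regular_bi_ideal_idempotent:
  assumes AG2: "gamma_AG2 op" and ir: "intra_regular op" and bi: "gamma_bi_ideal op B"
  shows "gprod op B B = B"
proof
  show "gprod op B B \<subseteq> B" using bi unfolding gamma_bi_ideal_def by blast
  show "B \<subseteq> gprod op B B"
  proof
    fix b assume bB: "b \<in> B"
    obtain ga de w where b: "b = op b ga (op (op b de w) de b)"
      using intra_regular_bi_factor[OF AG2 ir] by blast
    have "op (op b de w) de b \<in> gprod op (gprod op B UNIV) B"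
      using bB unfolding gprod_def by blast
    hence "op (op b de w) de b \<in> B" using bi unfolding gamma_bi_ideal_def by blast
    thus "b \<in> gprod op B B" using b bB unfolding gprod_def by blast
  qed
qed

definition gamma_left_ideal :: "('a \<Rightarrow> 'g \<Rightarrow> 'a \<Rightarrow> 'a) \<Rightarrow> 'a set \<Rightarrow> bool" where
  "gamma_left_ideal op L \<longleftrightarrow> (\<forall>u g v. v \<in> L \<longrightarrow> op u g v \<in> L)"

lemma left_multiples_iff: "v \<in> gprod op UNIV {a} \<longleftrightarrow> (\<exists>t e. v = op t e a)"
  unfolding gprod_def by blast

lemma left_ideal_bi_ideal:
  assumes "gamma_left_ideal op L" and "L \<noteq> {}"
  shows "gamma_bi_ideal op L"
  using assms unfolding gamma_left_ideal_def gamma_bi_ideal_def gprod_def by blast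

lemma left_multiples_left_ideal:
  assumes AG2: "gamma_AG2 op" and SS: "gprod op UNIV UNIV = UNIV"
  shows "gamma_left_ideal op (gprod op UNIV {a})"
  unfolding gamma_left_ideal_def
proof (intro allI impI)
  fix u d v assume "v \<in> gprod op UNIV {a}"
  then obtain t e where v: "v = op t e a" unfolding left_multiples_iff by blast
  have "u \<in> gprod op UNIV UNIV" using SS by simp
  then obtain p k q where u: "u = op p k q" unfolding gprod_def by blast
  have "op u d v = op (op a k t) d (op q e p)"
    using u v paramedial[OF AG2] by simp
  also have "\<dots> = op (op (op q e p) k t) d a"
    using left_invertive[OF AG2_is_AG[OF AG2]] .
  finally show "op u d v \<in> gprod op UNIV {a}" unfolding left_multiples_iff by blast
qed

lemma left_mult_insert:
  assumes "gamma_left_ideal op L" and "gprod op UNIV {a} \<subseteq> L" and "v \<in> insert a L"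
  shows "op u g v \<in> L"
  using assms unfolding gamma_left_ideal_def gprod_def by blast

lemma intra_regular_of_left_product:
  assumes AG2: "gamma_AG2 op" and a: "a = op (op s g a) d (op t e a)"
  shows "\<exists>x y be ga de. a = op (op x be (op a de a)) ga y"
proof -
  define u where "u = op s g t"
  have a1: "a = op u d (op a e a)"
    using a medial[OF AG2_is_AG[OF AG2], of s g a d t e a] unfolding u_def by simp
  also have "\<dots> = op a d (op u e a)" using AG2_exchange[OF AG2] .
  finally have "a = op (op u d (op a e a)) d (op u e a)" using a1 by simp
  thus ?thesis by blast
qed

lemma idempotent_bi_ideals_intra_regular:
  assumes AG2: "gamma_AG2 op"
    and idem: "\<forall>B. gamma_bi_ideal op B \<longrightarrow> gprod op B B = B"
  shows "intra_regular op"
  unfolding intra_regular_def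
proof
  fix a
  have "gamma_bi_ideal op UNIV" unfolding gamma_bi_ideal_def by simp
  hence SS: "gprod op UNIV UNIV = UNIV" using idem by blast
  define L where "L = gprod op UNIV {a}"
  have L_ideal: "gamma_left_ideal op L"
    unfolding L_def using left_multiples_left_ideal[OF AG2 SS] .
  have L_ne: "L \<noteq> {}" unfolding L_def gprod_def by blast
  have aL_ideal: "gamma_left_ideal op (insert a L)"
    using left_mult_insert[OF L_ideal, of a] unfolding L_def gamma_left_ideal_def by blast
  have "a \<in> gprod op (insert a L) (insert a L)"
    using idem left_ideal_bi_ideal[OF aL_ideal] by blast
  hence "a \<in> L"
    using left_mult_insert[OF L_ideal, of a] unfolding L_def gprod_def by blast
  hence "a \<in> gprod op L L" using idem left_ideal_bi_ideal[OF L_ideal L_ne] by blast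
  then obtain p d q where pq: "a = op p d q" "p \<in> L" "q \<in> L"
    unfolding gprod_def by blast
  obtain s g t e where ps: "p = op s g a" and qt: "q = op t e a"
    using pq(2,3) unfolding L_def left_multiples_iff by blast
  have "a = op (op s g a) d (op t e a)" using pq(1) unfolding ps qt .
  thus "\<exists>x y be ga de. a = op (op x be (op a de a)) ga y"
    using intra_regular_of_left_product[OF AG2] by blast
qed

theorem mainTheorem10:
  fixes op :: "'a \<Rightarrow> 'g \<Rightarrow> 'a \<Rightarrow> 'a"
  assumes "gamma_AG2 op"
  shows "intra_regular op \<longleftrightarrow> (\<forall>B. gamma_bi_ideal op B \<longrightarrow> gprod op B B = B)"
  using intra_regular_bi_ideal_idempotent[OF assms]
    idempotent_bi_ideals_intra_regular[OF assms] by blast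

end
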